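(* There is an infinite family of instances (temporal graphs $\mathcal G_n$ with parameters $T_{\max}$ and $\delta$ depending on $n$) such that, for every $k$, the witness complexity of $\mathcal G_n$ grows in $\Omega(|E(\mathcal G_n)|)$, with the implied constant independent of $k$.
   Context: A temporal graph $\mathcal G=(V,E,\lambda)$ with lifetime $T_{\max}$ consists of a finite undirected static graph $(V,E)$ and a labeling $\lambda:E\to\{1,\dots,T_{\max}\}$; edge $e$ is present only at time $\lambda(e)$. Infection model with parameter $\delta\in\mathbb N^+$: a set $S\subseteq V\times[0,T_{\max}]$ of at most $k$ seed infections is given; a seed $(u,t)$ makes $u$ infected at time $t$; otherwise a susceptible node $u$ becomes infected at time $t$ iff some neighbour $v$ infectious at time $t$ has $\lambda(uv)=t$ (exactly one infector recorded if several exist). A node infected at time $t$ is infectious at times $t+1,\dots,t+\delta$ and resistant afterwards. The infection log records triples $(u,v,t)$ ($u$ infected $v$ at time $t$; seeds as $(u,u,t)$); a log is consistent if produced by some infection chain. A witnessing schedule of length $a$ for $\mathcal G$ is a sequence $S_1,\dots,S_a$ of seed infection sets (each of size at most $k$) such that after performing these $a$ rounds, all edge labels of $\mathcal G$ are uniquely determined (among labelings of the known static graph $(V,E)$) by the infection logs of these rounds. The witness complexity of $\mathcal G$ is the length of a shortest witnessing schedule. *)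

theory Defs
  imports Complex_Main
begin

record tgraph =
  verts :: "nat set"
  edges :: "nat set set"
  lab   :: "nat set \<Rightarrow> nat"
  tmax  :: nat

definition tgraph_wf :: "tgraph \<Rightarrow> bool" where
  "tgraph_wf G \<longleftrightarrow> finite (verts G)
     \<and> (\<forall>e\<in>edges G. e \<subseteq> verts G \<and> card e = 2)
     \<and> (\<forall>e\<in>edges G. lab G e \<in> {1..tmax G})"

text \<open>An infection chain: ic u = Some (t, v) means u was infected at time t by v
  (v = u for a seed infection); None means u never got infected.
  The conditions characterise exactly the runs of the (nondeterministic in the choice
  of infector) infection process with infectious period delta and seed set S.\<close>
definition valid_chain ::
  "tgraph \<Rightarrow> nat \<Rightarrow> (nat \<times> nat) set \<Rightarrow> (nat \<Rightarrow> (nat \<times> nat) option) \<Rightarrow> bool" where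
  "valid_chain G \<delta> S ic \<longleftrightarrow>
     (\<forall>u t v. ic u = Some (t, v) \<longrightarrow> u \<in> verts G \<and>
        ((v = u \<and> (u, t) \<in> S) \<or>
         (v \<noteq> u \<and> (u, t) \<notin> S \<and> {u, v} \<in> edges G \<and> lab G {u, v} = t \<and>
          (\<exists>t' w. ic v = Some (t', w) \<and> t' < t \<and> t \<le> t' + \<delta>))))
   \<and> (\<forall>u t. (u, t) \<in> S \<longrightarrow> (\<exists>t' v. ic u = Some (t', v) \<and> t' \<le> t))
   \<and> (\<forall>u v t' w. {u, v} \<in> edges G \<longrightarrow> ic v = Some (t', w) \<longrightarrow>
        t' < lab G {u, v} \<longrightarrow> lab G {u, v} \<le> t' + \<delta> \<longrightarrow>
        (\<exists>t'' x. ic u = Some (t'', x) \<and> t'' \<le> lab G {u, v}))"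

text \<open>The infection log: triples (infector, infected, time); seeds as (u,u,t).\<close>
definition log_of :: "(nat \<Rightarrow> (nat \<times> nat) option) \<Rightarrow> (nat \<times> nat \<times> nat) set" where
  "log_of ic = {(v, u, t) | u v t. ic u = Some (t, v)}"

definition consistent_log ::
  "tgraph \<Rightarrow> nat \<Rightarrow> (nat \<times> nat) set \<Rightarrow> (nat \<times> nat \<times> nat) set \<Rightarrow> bool" where
  "consistent_log G \<delta> S L \<longleftrightarrow> (\<exists>ic. valid_chain G \<delta> S ic \<and> L = log_of ic)"

definition witnessing_schedule ::
  "tgraph \<Rightarrow> nat \<Rightarrow> nat \<Rightarrow> (nat \<times> nat) set list \<Rightarrow> bool" where
  "witnessing_schedule G \<delta> k Ss \<longleftrightarrow>
     (\<forall>S\<in>set Ss. S \<subseteq> verts G \<times> {0..tmax G} \<and> card S \<le> k)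
   \<and> (\<forall>lab'. (\<forall>e\<in>edges G. lab' e \<in> {1..tmax G}) \<longrightarrow>
        (\<forall>Ls. length Ls = length Ss \<longrightarrow>
           (\<forall>i<length Ss. consistent_log G \<delta> (Ss ! i) (Ls ! i)
                         \<and> consistent_log (G\<lparr>lab := lab'\<rparr>) \<delta> (Ss ! i) (Ls ! i)) \<longrightarrow>
           (\<forall>e\<in>edges G. lab' e = lab G e)))"

definition has_witnessing_schedule :: "tgraph \<Rightarrow> nat \<Rightarrow> nat \<Rightarrow> bool" where
  "has_witnessing_schedule G \<delta> k \<longleftrightarrow> (\<exists>Ss. witnessing_schedule G \<delta> k Ss)"

definition witness_complexity :: "tgraph \<Rightarrow> nat \<Rightarrow> nat \<Rightarrow> nat" where
  "witness_complexity G \<delta> k = (LEAST a. \<exists>Ss. length Ss = a \<and> witnessing_schedule G \<delta> k Ss)"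

end

theory Submission
  imports Defs
begin

text \<open>
  Take the star with hub 0 and leaves 1..m, the edge {0, j} carrying label j, and \<delta> = 1.
  Seeding the hub at time t forces leaf t + 1 to be infected by the hub at time t + 1,
  which reveals the label of {0, t + 1}; so m rounds suffice.
  Conversely, in a round with seed set S let every node be infected as early as possible,
  the hub at time h.  Only the edges {0, h} and {0, h + 1} can carry an infection between the
  hub and a leaf.  If a schedule has a rounds and m > 2a + 1, some leaf x avoids all these
  edges, and its edge can be relabelled to a time l \<noteq> x at which neither endpoint is
  infectious in any round.  The earliest-infection chains stay valid, so every round has the
  same log under both labelings and the schedule is not witnessing.  Hence m \<le> 2a + 1, and
  the witness complexity of the star is at least (m - 1)/2, whatever k is.
\<close>

lemma valid_chain_infectedD:
  assumes "valid_chain G \<delta> S ic" "ic u = Some (t, v)"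
  shows "u \<in> verts G" "v = u \<Longrightarrow> (u, t) \<in> S"
    and "v \<noteq> u \<Longrightarrow> (u, t) \<notin> S \<and> {u, v} \<in> edges G \<and> lab G {u, v} = t
           \<and> (\<exists>t' w. ic v = Some (t', w) \<and> t' < t \<and> t \<le> t' + \<delta>)"
  using assms unfolding valid_chain_def by blast+

lemma valid_chain_seedD:
  assumes "valid_chain G \<delta> S ic" "(u, t) \<in> S"
  obtains t' v where "ic u = Some (t', v)" "t' \<le> t"
  using assms unfolding valid_chain_def by blast

lemma valid_chain_transmitD:
  assumes "valid_chain G \<delta> S ic" "{u, v} \<in> edges G" "ic v = Some (t, w)"
    and "t < lab G {u, v}" "lab G {u, v} \<le> t + \<delta>"
  obtains t' x where "ic u = Some (t', x)" "t' \<le> lab G {u, v}"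
  using assms unfolding valid_chain_def by blast

lemma valid_chain_infection_label:
  assumes "valid_chain G \<delta> S ic" "ic u = Some (t, v)" "v \<noteq> u"
  shows "lab G {u, v} = t"
  using valid_chain_infectedD(3)[OF assms(1,2)] assms(3) by blast

lemma consistent_log_infection_label:
  assumes "consistent_log G \<delta> S L" "(v, u, t) \<in> L" "v \<noteq> u"
  shows "lab G {u, v} = t"
  using assms valid_chain_infection_label unfolding consistent_log_def log_of_def by blast

lemma valid_chain_relabel_unused_edge:
  assumes "valid_chain G \<delta> S ic"
    and unused: "\<And>u t v. ic u = Some (t, v) \<Longrightarrow> v \<noteq> u \<Longrightarrow> {u, v} \<noteq> e"
    and silent: "\<And>v t w. v \<in> e \<Longrightarrow> ic v = Some (t, w) \<Longrightarrow> l \<notin> {t<..t + \<delta>}"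
  shows "valid_chain (G\<lparr>lab := (lab G)(e := l)\<rparr>) \<delta> S ic"
proof -
  let ?lab = "(lab G)(e := l)"
  have old_label: "?lab {u, v} = lab G {u, v}" if "{u, v} \<noteq> e" for u v
    using that by simp
  from assms(1) show ?thesis
    unfolding valid_chain_def
    apply (elim conjE, intro conjI)
    subgoal using unused old_label by simp metis
    subgoal by simp
    subgoal using silent old_label by simp (metis greaterThanAtMost_iff insertCI)
    done
qed

lemma witnessing_schedule_rigid:
  assumes W: "witnessing_schedule G \<delta> k Ss"
    and range: "\<forall>e\<in>edges G. lab' e \<in> {1..tmax G}"
    and common: "\<And>S. S \<in> set Ss \<Longrightarrow>
      \<exists>ic. valid_chain G \<delta> S ic \<and> valid_chain (G\<lparr>lab := lab'\<rparr>) \<delta> S ic"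
  shows "\<forall>e\<in>edges G. lab' e = lab G e"
proof -
  from common obtain ch where ch: "\<And>S. S \<in> set Ss \<Longrightarrow>
      valid_chain G \<delta> S (ch S) \<and> valid_chain (G\<lparr>lab := lab'\<rparr>) \<delta> S (ch S)"
    by metis
  define Ls where "Ls = map (\<lambda>S. log_of (ch S)) Ss"
  have "consistent_log G \<delta> (Ss ! i) (Ls ! i) \<and> consistent_log (G\<lparr>lab := lab'\<rparr>) \<delta> (Ss ! i) (Ls ! i)"
    if "i < length Ss" for i
    using ch[of "Ss ! i"] that unfolding consistent_log_def Ls_def by auto
  moreover have "length Ls = length Ss"
    by (simp add: Ls_def)
  ultimately show ?thesis
    using W range unfolding witnessing_schedule_def by blast
qed

lemma witness_complexity_attained:
  assumes "has_witnessing_schedule G \<delta> k"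
  obtains Ss where "length Ss = witness_complexity G \<delta> k" "witnessing_schedule G \<delta> k Ss"
proof -
  have "\<exists>a Ss. length Ss = a \<and> witnessing_schedule G \<delta> k Ss"
    using assms unfolding has_witnessing_schedule_def by blast
  from LeastI_ex[OF this] show ?thesis
    using that unfolding witness_complexity_def by blast
qed

lemma ex_in_interval_notin:
  assumes "finite B" "card B < m"
  shows "\<exists>x\<in>{1..m}. x \<notin> B"
proof (rule ccontr)
  assume "\<not> ?thesis"
  then have "card {1..m} \<le> card B"
    using assms(1) by (intro card_mono) auto
  with assms(2) show False by simp
qed

definition star_tgraph :: "nat \<Rightarrow> tgraph" where
  "star_tgraph m = \<lparr>verts = {0..m}, edges = (\<lambda>j. {0, j}) ` {1..m}, lab = Max, tmax = m\<rparr>"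

lemma star_tgraph_edges: "edges (star_tgraph m) = (\<lambda>j. {0, j}) ` {1..m}"
  by (simp add: star_tgraph_def)

lemma star_tgraph_simps [simp]:
  "verts (star_tgraph m) = {0..m}"
  "lab (star_tgraph m) = Max"
  "tmax (star_tgraph m) = m"
  by (simp_all add: star_tgraph_def)

lemma star_tgraph_edge_iff [simp]:
  "{u, v} \<in> edges (star_tgraph m) \<longleftrightarrow> (u = 0 \<and> v \<in> {1..m}) \<or> (v = 0 \<and> u \<in> {1..m})"
  by (auto simp: star_tgraph_edges doubleton_eq_iff)

lemma tgraph_wf_star: "tgraph_wf (star_tgraph m)"
  unfolding tgraph_wf_def by (auto simp: star_tgraph_edges)

lemma card_edges_star: "card (edges (star_tgraph m)) = m"
proof -
  have "inj_on (\<lambda>j. {0 :: nat, j}) {1..m}"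
    by (auto simp: inj_on_def doubleton_eq_iff)
  then show ?thesis
    by (simp add: star_tgraph_edges card_image)
qed

lemma star_hub_seed_infects_next_leaf:
  assumes V: "valid_chain (star_tgraph m) 1 {(0, t)} ic" and "t < m"
  shows "ic (Suc t) = Some (Suc t, 0)"
proof -
  have leaf: "v = 0 \<and> s = u \<and> (\<exists>s' w. ic 0 = Some (s', w) \<and> s' < s)"
    if "ic u = Some (s, v)" "u \<noteq> 0" for u s v
    using valid_chain_infectedD[OF V that(1)] that(2) by (cases "v = u") auto
  obtain t0 v0 where hub: "ic 0 = Some (t0, v0)" "t0 \<le> t"
    using valid_chain_seedD[OF V, of 0 t] by auto
  have "v0 = 0"
  proof (rule ccontr)
    assume "v0 \<noteq> 0"
    then obtain t' w where "ic v0 = Some (t', w)" "t' < t0"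
      using valid_chain_infectedD(3)[OF V hub(1)] by auto
    with leaf[of v0] hub \<open>v0 \<noteq> 0\<close> show False
      by auto
  qed
  then have "t0 = t"
    using valid_chain_infectedD(2)[OF V hub(1)] by simp
  moreover have "{Suc t, 0} \<in> edges (star_tgraph m)"
    using \<open>t < m\<close> by simp
  ultimately obtain s x where "ic (Suc t) = Some (s, x)" "s \<le> Suc t"
    using valid_chain_transmitD[OF V _ hub(1), where u = "Suc t"] by simp blast
  with leaf[of "Suc t"] show ?thesis
    by auto
qed

lemma witnessing_schedule_star:
  assumes "k \<ge> 1"
  shows "witnessing_schedule (star_tgraph m) 1 k (map (\<lambda>t. {(0, t)}) [0..<m])"
  unfolding witnessing_schedule_def
proof (intro conjI ballI allI impI)
  fix S assume "S \<in> set (map (\<lambda>t. {(0 :: nat, t)}) [0..<m])"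
  then show "S \<subseteq> verts (star_tgraph m) \<times> {0..tmax (star_tgraph m)}" "card S \<le> k"
    using assms by auto
next
  fix lab' Ls e
  assume logs: "\<forall>i<length (map (\<lambda>t. {(0 :: nat, t)}) [0..<m]).
      consistent_log (star_tgraph m) 1 (map (\<lambda>t. {(0, t)}) [0..<m] ! i) (Ls ! i) \<and>
      consistent_log (star_tgraph m\<lparr>lab := lab'\<rparr>) 1 (map (\<lambda>t. {(0, t)}) [0..<m] ! i) (Ls ! i)"
    and "e \<in> edges (star_tgraph m)"
  then obtain t where e: "e = {0, Suc t}" "t < m"
    by (auto simp: star_tgraph_edges) (metis Suc_le_eq Suc_pred)
  with logs have "consistent_log (star_tgraph m) 1 {(0, t)} (Ls ! t)"
    and relabelled: "consistent_log (star_tgraph m\<lparr>lab := lab'\<rparr>) 1 {(0, t)} (Ls ! t)"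
    by auto
  then obtain ic where "valid_chain (star_tgraph m) 1 {(0, t)} ic" "Ls ! t = log_of ic"
    unfolding consistent_log_def by blast
  with \<open>t < m\<close> have "(0, Suc t, Suc t) \<in> Ls ! t"
    using star_hub_seed_infects_next_leaf unfolding log_of_def by blast
  from consistent_log_infection_label[OF relabelled this] show "lab' e = lab (star_tgraph m) e"
    using e by (simp add: insert_commute)
qed

text \<open>Suc m stands for "never": all seed times of a schedule lie in {0..m}.\<close>

definition first_seed :: "nat \<Rightarrow> (nat \<times> nat) set \<Rightarrow> nat \<Rightarrow> nat" where
  "first_seed m S u = (LEAST t. (u, t) \<in> S \<or> t = Suc m)"

text \<open>The hub is infected earliest either by its own seed or by a leaf t seeded at time t - 1,
  which is still infectious when the edge {0, t} appears at time t.\<close>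

definition hub_time :: "nat \<Rightarrow> (nat \<times> nat) set \<Rightarrow> nat" where
  "hub_time m S = (LEAST t. (0, t) \<in> S \<or> (t \<in> {1..m} \<and> Suc (first_seed m S t) = t) \<or> t = Suc m)"

definition canonical_chain :: "nat \<Rightarrow> (nat \<times> nat) set \<Rightarrow> nat \<Rightarrow> (nat \<times> nat) option" where
  "canonical_chain m S u =
    (if u = 0 then
       if hub_time m S \<le> m
       then Some (hub_time m S, if (0, hub_time m S) \<in> S then 0 else hub_time m S) else None
     else if u \<le> m \<and> Suc (hub_time m S) = u \<and> u < first_seed m S u then Some (u, 0)
     else if first_seed m S u \<le> m then Some (first_seed m S u, u) else None)"

lemma first_seed_le: "(u, t) \<in> S \<Longrightarrow> first_seed m S u \<le> t"
  unfolding first_seed_def by (rule Least_le) simp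

lemma first_seed_mem: "first_seed m S u \<le> m \<Longrightarrow> (u, first_seed m S u) \<in> S"
  using LeastI[of "\<lambda>t. (u, t) \<in> S \<or> t = Suc m" "Suc m"] unfolding first_seed_def by auto

lemma hub_time_le_seed: "(0, t) \<in> S \<Longrightarrow> hub_time m S \<le> t"
  unfolding hub_time_def by (rule Least_le) simp

lemma hub_time_le_leaf: "t \<in> {1..m} \<Longrightarrow> Suc (first_seed m S t) = t \<Longrightarrow> hub_time m S \<le> t"
  unfolding hub_time_def by (rule Least_le) simp

lemma hub_time_cases:
  assumes "hub_time m S \<le> m"
  shows "(0, hub_time m S) \<in> S \<or>
    (hub_time m S \<in> {1..m} \<and> Suc (first_seed m S (hub_time m S)) = hub_time m S)"
  using LeastI[of "\<lambda>t. (0, t) \<in> S \<or> (t \<in> {1..m} \<and> Suc (first_seed m S t) = t) \<or> t = Suc m" "Suc m"]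
    assms unfolding hub_time_def by auto

lemma canonical_chain_infected:
  assumes S: "S \<subseteq> {0..m} \<times> {0..m}" and ch: "canonical_chain m S u = Some (t, v)"
  shows "u \<le> m \<and> (v = u \<and> (u, t) \<in> S \<or>
    v \<noteq> u \<and> (u, t) \<notin> S \<and> {u, v} \<in> edges (star_tgraph m) \<and> max u v = t \<and>
    (\<exists>t' w. canonical_chain m S v = Some (t', w) \<and> t' < t \<and> t \<le> Suc t'))"
proof -
  let ?h = "hub_time m S" and ?f = "first_seed m S"
  consider (hub) "u = 0" "?h \<le> m" "t = ?h" "v = (if (0, ?h) \<in> S then 0 else ?h)"
    | (leaf) "u \<noteq> 0" "u \<le> m" "Suc ?h = u" "u < ?f u" "t = u" "v = 0"
    | (seeded) "u \<noteq> 0" "?f u \<le> m" "t = ?f u" "v = u"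
  proof (cases "u = 0")
    case True
    with ch show thesis
      by (intro hub) (auto simp: canonical_chain_def split: if_split_asm)
  next
    case False
    show thesis
    proof (cases "u \<le> m \<and> Suc ?h = u \<and> u < ?f u")
      case True
      with ch \<open>u \<noteq> 0\<close> show thesis
        by (intro leaf) (auto simp: canonical_chain_def)
    next
      case no_leaf: False
      with ch \<open>u \<noteq> 0\<close> show thesis
        by (intro seeded) (auto simp: canonical_chain_def split: if_split_asm)
    qed
  qed
  then show ?thesis
  proof cases
    case hub
    show ?thesis
    proof (cases "(0, ?h) \<in> S")
      case False
      with hub hub_time_cases have "?h \<in> {1..m}" "Suc (?f ?h) = ?h"
        by auto
      then have "canonical_chain m S ?h = Some (?f ?h, ?h)"
        unfolding canonical_chain_def by auto
      with hub False \<open>?h \<in> {1..m}\<close> \<open>Suc (?f ?h) = ?h\<close> show ?thesis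
        by auto
    qed (use hub in auto)
  next
    case leaf
    then have "(u, u) \<notin> S"
      using first_seed_le not_le by blast
    moreover have "canonical_chain m S 0 = Some (?h, if (0, ?h) \<in> S then 0 else ?h)"
      using leaf unfolding canonical_chain_def by auto
    ultimately show ?thesis
      using leaf by auto
  next
    case seeded
    with first_seed_mem have "(u, t) \<in> S"
      by simp
    with seeded S show ?thesis
      by auto
  qed
qed

lemma canonical_chain_seed:
  assumes S: "S \<subseteq> {0..m} \<times> {0..m}" and "(u, t) \<in> S"
  obtains t' v where "canonical_chain m S u = Some (t', v)" "t' \<le> t"
proof (cases "u = 0")
  case True
  with assms hub_time_le_seed[of t S m] show thesis
    using that by (auto simp: canonical_chain_def)
next
  case False
  from assms have "first_seed m S u \<le> t" "t \<le> m" "u \<le> m"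
    using first_seed_le by auto
  with False show thesis
    using that by (cases "Suc (hub_time m S) = u \<and> u < first_seed m S u")
      (auto simp: canonical_chain_def)
qed

lemma canonical_chain_transmit:
  assumes "{u, v} \<in> edges (star_tgraph m)" and ch: "canonical_chain m S v = Some (t, w)"
    and "t < max u v" "max u v \<le> Suc t"
  obtains t' x where "canonical_chain m S u = Some (t', x)" "t' \<le> max u v"
proof (cases "v = 0")
  case True
  with assms have "u \<in> {1..m}" "u = Suc (hub_time m S)"
    by (auto simp: canonical_chain_def split: if_split_asm)
  with True show thesis
    using that by (cases "u < first_seed m S u") (auto simp: canonical_chain_def)
next
  case False
  with assms have "u = 0" "v \<in> {1..m}" "Suc t = v"
    by auto
  with ch have "Suc (first_seed m S v) = v"
    by (auto simp: canonical_chain_def split: if_split_asm)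
  with \<open>v \<in> {1..m}\<close> have "hub_time m S \<le> v"
    by (rule hub_time_le_leaf)
  with \<open>u = 0\<close> \<open>v \<in> {1..m}\<close> show thesis
    using that by (auto simp: canonical_chain_def)
qed

lemma canonical_chain_valid:
  assumes S: "S \<subseteq> {0..m} \<times> {0..m}"
  shows "valid_chain (star_tgraph m) 1 S (canonical_chain m S)"
  unfolding valid_chain_def
proof (intro conjI; intro allI impI)
  fix u t v
  assume "canonical_chain m S u = Some (t, v)"
  from canonical_chain_infected[OF S this]
  show "u \<in> verts (star_tgraph m) \<and> (v = u \<and> (u, t) \<in> S \<or> v \<noteq> u \<and> (u, t) \<notin> S \<and>
    {u, v} \<in> edges (star_tgraph m) \<and> lab (star_tgraph m) {u, v} = t \<and>
    (\<exists>t' w. canonical_chain m S v = Some (t', w) \<and> t' < t \<and> t \<le> t' + 1))"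
    by auto
next
  fix u t
  assume "(u, t) \<in> S"
  then show "\<exists>t' v. canonical_chain m S u = Some (t', v) \<and> t' \<le> t"
    using canonical_chain_seed[OF S] by metis
next
  fix u v t w
  assume edge: "{u, v} \<in> edges (star_tgraph m)" and ch: "canonical_chain m S v = Some (t, w)"
    and "t < lab (star_tgraph m) {u, v}" "lab (star_tgraph m) {u, v} \<le> t + 1"
  then have "t < max u v" "max u v \<le> Suc t"
    by simp_all
  from canonical_chain_transmit[OF edge ch this] obtain t' x
    where "canonical_chain m S u = Some (t', x)" "t' \<le> max u v" .
  then show "\<exists>t' x. canonical_chain m S u = Some (t', x) \<and> t' \<le> lab (star_tgraph m) {u, v}"
    by auto
qed

lemma canonical_chain_valid_relabel:
  assumes S: "S \<subseteq> {0..m} \<times> {0..m}"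
    and x: "x \<in> {1..m}" "x \<noteq> hub_time m S" "x \<noteq> Suc (hub_time m S)"
    and l: "l \<noteq> Suc (hub_time m S)" "\<And>t v. canonical_chain m S x = Some (t, v) \<Longrightarrow> l \<noteq> Suc t"
  shows "valid_chain (star_tgraph m\<lparr>lab := (lab (star_tgraph m))({0, x} := l)\<rparr>) 1 S
    (canonical_chain m S)"
proof (rule valid_chain_relabel_unused_edge[OF canonical_chain_valid[OF S]])
  fix u t v
  assume ch: "canonical_chain m S u = Some (t, v)" "v \<noteq> u"
  show "{u, v} \<noteq> {0, x}"
  proof
    assume "{u, v} = {0, x}"
    then consider "u = 0" "v = x" | "u = x" "v = 0"
      by (auto simp: doubleton_eq_iff)
    then show False
      using ch x by cases (auto simp: canonical_chain_def split: if_split_asm)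
  qed
next
  fix v t w
  assume "v \<in> {0, x}" "canonical_chain m S v = Some (t, w)"
  then show "l \<notin> {t<..t + 1}"
    using l by (auto simp: canonical_chain_def split: if_split_asm)
qed

lemma star_schedule_avoidable_edge:
  assumes "2 * length Ss + 1 < m"
  obtains x l where "x \<in> {1..m}" "l \<in> {1..m}" "l \<noteq> x"
    and "\<And>S. S \<in> set Ss \<Longrightarrow> x \<noteq> hub_time m S \<and> x \<noteq> Suc (hub_time m S) \<and> l \<noteq> Suc (hub_time m S)"
    and "\<And>S t v. S \<in> set Ss \<Longrightarrow> canonical_chain m S x = Some (t, v) \<Longrightarrow> l \<noteq> Suc t"
proof -
  define H where "H = hub_time m ` set Ss"
  have card_H: "card H \<le> length Ss"
    unfolding H_def using card_image_le card_length le_trans by blast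
  have "card (H \<union> Suc ` H) \<le> 2 * length Ss"
    using card_Un_le[of H "Suc ` H"] card_image_le[of H Suc] card_H unfolding H_def by simp
  then obtain x where x: "x \<in> {1..m}" "x \<notin> H \<union> Suc ` H"
    using ex_in_interval_notin[of "H \<union> Suc ` H" m] assms unfolding H_def by auto
  define R where "R = (\<lambda>S. Suc (fst (the (canonical_chain m S x)))) ` set Ss"
  have card_R: "card R \<le> length Ss"
    unfolding R_def using card_image_le card_length le_trans by blast
  have "card (insert x (Suc ` H \<union> R)) \<le> Suc (card (Suc ` H \<union> R))"
    by (simp add: card_insert_if H_def R_def)
  also have "\<dots> \<le> Suc (card (Suc ` H) + card R)"
    using card_Un_le by simp
  also have "\<dots> \<le> 2 * length Ss + 1"
    using card_image_le[of H Suc] card_H card_R unfolding H_def by simp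
  finally obtain l where l: "l \<in> {1..m}" "l \<notin> insert x (Suc ` H \<union> R)"
    using ex_in_interval_notin[of "insert x (Suc ` H \<union> R)" m] assms
    unfolding H_def R_def by auto
  have in_R: "Suc t \<in> R" if "S \<in> set Ss" "canonical_chain m S x = Some (t, v)" for S t v
    unfolding R_def using that by (auto intro!: image_eqI[of _ _ S])
  show thesis
  proof (rule that)
    show "x \<in> {1..m}" "l \<in> {1..m}" "l \<noteq> x"
      using x l by auto
    show "x \<noteq> hub_time m S \<and> x \<noteq> Suc (hub_time m S) \<and> l \<noteq> Suc (hub_time m S)"
      if "S \<in> set Ss" for S
      using x l that unfolding H_def by auto
    show "l \<noteq> Suc t" if "S \<in> set Ss" "canonical_chain m S x = Some (t, v)" for S t v
      using l in_R[OF that] by auto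
  qed
qed

lemma star_witnessing_schedule_length:
  assumes W: "witnessing_schedule (star_tgraph m) 1 k Ss"
  shows "m \<le> 2 * length Ss + 1"
proof (rule ccontr)
  assume "\<not> ?thesis"
  then obtain x l where x: "x \<in> {1..m}" and l: "l \<in> {1..m}" "l \<noteq> x"
    and hub: "\<And>S. S \<in> set Ss \<Longrightarrow> x \<noteq> hub_time m S \<and> x \<noteq> Suc (hub_time m S) \<and> l \<noteq> Suc (hub_time m S)"
    and silent: "\<And>S t v. S \<in> set Ss \<Longrightarrow> canonical_chain m S x = Some (t, v) \<Longrightarrow> l \<noteq> Suc t"
    using star_schedule_avoidable_edge by (metis not_le_imp_less)
  have S: "S \<subseteq> {0..m} \<times> {0..m}" if "S \<in> set Ss" for S
    using W that unfolding witnessing_schedule_def by auto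
  define lab' where "lab' = (lab (star_tgraph m))({0, x} := l)"
  have "\<forall>e\<in>edges (star_tgraph m). lab' e = lab (star_tgraph m) e"
  proof (rule witnessing_schedule_rigid[OF W])
    show "\<forall>e\<in>edges (star_tgraph m). lab' e \<in> {1..tmax (star_tgraph m)}"
      using l by (auto simp: lab'_def star_tgraph_edges)
  next
    fix S
    assume "S \<in> set Ss"
    with hub silent show "\<exists>ic. valid_chain (star_tgraph m) 1 S ic \<and>
        valid_chain (star_tgraph m\<lparr>lab := lab'\<rparr>) 1 S ic"
      using canonical_chain_valid[OF S] canonical_chain_valid_relabel[OF S x]
      unfolding lab'_def by blast
  qed
  moreover have "{0, x} \<in> edges (star_tgraph m)"
    using x by simp
  ultimately have "lab' {0, x} = lab (star_tgraph m) {0, x}"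
    by blast
  with l show False
    by (simp add: lab'_def)
qed

theorem mainTheorem3:
  shows "\<exists>(G :: nat \<Rightarrow> tgraph) (\<delta> :: nat \<Rightarrow> nat) (c :: real).
     c > 0
   \<and> (\<forall>n. tgraph_wf (G n) \<and> \<delta> n \<ge> 1)
   \<and> filterlim (\<lambda>n. card (edges (G n))) at_top sequentially
   \<and> (\<forall>k::nat. k \<ge> 1 \<longrightarrow>
        (\<forall>\<^sub>F n in sequentially.
           has_witnessing_schedule (G n) (\<delta> n) k
         \<and> c * real (card (edges (G n))) \<le> real (witness_complexity (G n) (\<delta> n) k)))"
proof -
  define G where "G n = star_tgraph (n + 2)" for n
  have scheduled: "has_witnessing_schedule (G n) 1 k" if "k \<ge> 1" for n k
    using witnessing_schedule_star[OF that] unfolding has_witnessing_schedule_def G_def by blast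
  have "1 / 4 * real (card (edges (G n))) \<le> real (witness_complexity (G n) 1 k)"
    if k: "k \<ge> 1" for n k
  proof -
    obtain Ss where "length Ss = witness_complexity (G n) 1 k" "witnessing_schedule (G n) 1 k Ss"
      using witness_complexity_attained[OF scheduled[OF k]] .
    then have "n + 2 \<le> 2 * witness_complexity (G n) 1 k + 1"
      unfolding G_def by (metis star_witnessing_schedule_length)
    then show ?thesis
      by (simp add: G_def card_edges_star)
  qed
  moreover have "filterlim (\<lambda>n. card (edges (G n))) at_top sequentially"
    unfolding G_def card_edges_star by (rule filterlim_add_const_nat_at_top)
  ultimately show ?thesis
    using scheduled tgraph_wf_star unfolding G_def
    by (intro exI[of _ G] exI[of _ "\<lambda>_. 1"] exI[of _ "1 / 4 :: real"]) (simp add: G_def)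
qed

end
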